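(* Let $E=\begin{pmatrix}1&0\\0&z\end{pmatrix}$, $U=\begin{pmatrix}x&z\\1&0\end{pmatrix}$ and $P=UE$, matrices over $\mathrm{GF}(2)[x,z]$, acting on row vectors from the right. Then (i) for $n\ge0$, $(f^{(n+1)},g^{(n+1)})=(f^{(n)},g^{(n)})M_n$ where $M_n=E$ if $n$ is even and $M_n=U$ if $n$ is odd; (ii) for $i\ge1$, $$(f^{(2i)},g^{(2i)})=(x+z,z^2)\,P^{i-1}U\quad\text{and}\quad (f^{(2i+1)},g^{(2i+1)})=(x+z,z^2)\,P^{i}.$$
   Context: $\mathbb{F}=\mathrm{GF}(2)$, $R=\mathbb{F}[x,z]$, $|\cdot|$ is total degree. Let $(r_0,r_1,\ldots)$ be the binary sequence with $r_i=1$ if $i=2^j-1$ for some $j\ge 0$ and $r_i=0$ otherwise. For $n\ge1$ its inverse form is $R^{(1-n)}=\sum_{j=1-n}^{0}r_{-j}\,x^{j}z^{1-n-j}\in\mathbb{F}[x^{-1},z^{-1}]$. For a form $f\in R$ and such a form $G$, $\Delta(f;G)$ is the coefficient of $x^{|f|+|G|}z^0$ in $f\cdot G$ computed in $\mathbb{F}[x^{\pm1},z^{\pm1}]$ if $|f|+|G|\le 0$, and $0$ otherwise. Define forms recursively: $(f^{(0)},g^{(0)})=(x+z,z)$; for $k\ge0$ let $d_k=|g^{(k)}|-|f^{(k)}|$ and $\Delta_k=\Delta(f^{(k)};R^{(-1-k)})$, and set $(f^{(k+1)},g^{(k+1)})=(f^{(k)},zg^{(k)})$ if $\Delta_k=0$;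 $=(f^{(k)}+x^{-d_k}g^{(k)},\,zg^{(k)})$ if $\Delta_k=1$ and $d_k\le0$; $=(x^{d_k}f^{(k)}+g^{(k)},\,zf^{(k)})$ if $\Delta_k=1$ and $d_k>0$. *)

theory Defs
  imports "HOL-Computational_Algebra.Polynomial" "HOL-Library.Z2"
begin

text \<open>Bivariate polynomials over GF(2) = bit, represented as polynomials in z whose
  coefficients are polynomials in x:  p = \<Sum>_b (coeff p b)(x) z^b.\<close>

type_synonym form = "bit poly poly"

definition mcoeff :: "form \<Rightarrow> nat \<Rightarrow> nat \<Rightarrow> bit" where
  "mcoeff p a b = coeff (coeff p b) a"

definition Xf :: form where "Xf = [:[:0, 1:]:]"
definition Zf :: form where "Zf = [:0, 1:]"

definition tdeg :: "form \<Rightarrow> nat" where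
  "tdeg p = (if p = 0 then 0 else Max {a + b | a b. mcoeff p a b \<noteq> 0})"

definition rseq :: "nat \<Rightarrow> bit" where
  "rseq i = (if \<exists>j. i = 2 ^ j - 1 then 1 else 0)"

text \<open>Delta(f; R^(1-n)): coefficient of x^(|f|+|G|) z^0 in f * R^(1-n), where
  R^(1-n) = sum_{j=1-n}^{0} r_(-j) x^j z^(1-n-j), |G| = 1-n; written out explicitly:
  the monomial x^a z^b of f contributes with x^j z^(1-n-j) iff b+1-n-j=0 and
  a+j = |f|+1-n.\<close>
definition Delta :: "form \<Rightarrow> nat \<Rightarrow> bit" where
  "Delta f n = (if int (tdeg f) + (1 - int n) \<le> 0 then
     (\<Sum>j\<in>{1 - int n..0}.
        (if int (tdeg f) + (1 - int n) - j \<ge> 0 \<and> int n - 1 + j \<ge> 0 then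
           rseq (nat (- j)) * mcoeff f (nat (int (tdeg f) + (1 - int n) - j)) (nat (int n - 1 + j))
         else 0))
   else 0)"

definition xpow :: "nat \<Rightarrow> form \<Rightarrow> form" where
  "xpow m f = smult (monom 1 m) f"

definition step :: "nat \<Rightarrow> form \<times> form \<Rightarrow> form \<times> form" where
  "step k fg = (let f = fst fg; g = snd fg; d = int (tdeg g) - int (tdeg f) in
     if Delta f (k + 2) = 0 then (f, Zf * g)
     else if d \<le> 0 then (f + xpow (nat (- d)) g, Zf * g)
     else (xpow (nat d) f + g, Zf * f))"
  \<comment> \<open>Delta_k = Delta(f^(k); R^(-1-k)) = Delta f (k+2) since 1-(k+2) = -1-k\<close>

fun FG :: "nat \<Rightarrow> form \<times> form" where
  "FG 0 = (Xf + Zf, Zf)"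
| "FG (Suc k) = step k (FG k)"

text \<open>2x2 matrices (a,b,c,d) = [[a,b],[c,d]], acting on row vectors from the right.\<close>
type_synonym mat2 = "form \<times> form \<times> form \<times> form"

definition vmul :: "form \<times> form \<Rightarrow> mat2 \<Rightarrow> form \<times> form" where
  "vmul v M = (case v of (f, g) \<Rightarrow> case M of (a, b, c, d) \<Rightarrow> (f * a + g * c, f * b + g * d))"

definition mmul :: "mat2 \<Rightarrow> mat2 \<Rightarrow> mat2" where
  "mmul M N = (case M of (a, b, c, d) \<Rightarrow> case N of (a', b', c', d') \<Rightarrow>
     (a * a' + b * c', a * b' + b * d', c * a' + d * c', c * b' + d * d'))"

definition mid :: mat2 where "mid = (1, 0, 0, 1)"

fun mpow :: "mat2 \<Rightarrow> nat \<Rightarrow> mat2" where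
  "mpow M 0 = mid"
| "mpow M (Suc n) = mmul (mpow M n) M"

definition Emat :: mat2 where "Emat = (1, 0, 0, Zf)"
definition Umat :: mat2 where "Umat = (Xf, Zf, 1, 0)"
definition Pmat :: mat2 where "Pmat = mmul Umat Emat"

end

theory Submission
  imports Defs "HOL-Computational_Algebra.Formal_Power_Series"
begin

text \<open>
  The pairs run through (F(i+1), z F(i)) and (F(i+1), z^2 F(i)), where F(0) = 1,
  F(1) = x + z and F(n+2) = x F(n+1) + z^2 F(n), provided the discrepancy of F(i+1) is 0 at
  even and 1 at odd steps. For the homogeneous F(n) with dehomogenisation D(n)(t), that
  discrepancy is the sum over a of D(n)_a r_(a+s), i.e. D(n)(S) applied to r with S the shift.
  Over GF(2) the series R = \<Sum> r_i X^i satisfies R = 1 + X R^2, hence S R = R^2 and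
  1 + R = X R^2, and along the recurrence D(n)(S) R = X^n R^(2n+1): its coefficients vanish
  below n and equal 1 at n. The matrix identities are then a rewriting of the two step rules.
\<close>

(* Z2 rewrites + and * on bit into XOR and AND, which derails ring reasoning. *)
declare add_bit_eq_xor [simp del] mult_bit_eq_and [simp del]

lemma bit_sum_self_convolution:
  fixes f :: "nat \<Rightarrow> bit"
  shows "(\<Sum>i=0..m. f i * f (m - i)) = (if even m then f (m div 2) else 0)"
proof -
  let ?g = "\<lambda>i. f i * f (m - i)"
  define L where "L = {i\<in>{0..m}. 2 * i < m}"
  define H where "H = {i\<in>{0..m}. 2 * i > m}"
  define C where "C = {i\<in>{0..m}. 2 * i = m}"
  have split: "{0..m} = L \<union> H \<union> C" by (auto simp: L_def H_def C_def)
  have "sum ?g {0..m} = sum ?g L + sum ?g H + sum ?g C"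
    unfolding split by (subst sum.union_disjoint; (force simp: L_def H_def C_def)?)+
  also have "sum ?g H = sum ?g L"
    by (rule sum.reindex_bij_witness[of _ "\<lambda>i. m - i" "\<lambda>i. m - i"])
       (auto simp: L_def H_def mult.commute)
  also have "C = (if even m then {m div 2} else {})"
    by (auto simp: C_def)
  finally show ?thesis
    by (cases "f (m div 2)") auto
qed

lemma fps_square_nth_bit:
  fixes A :: "bit fps"
  shows "fps_nth (A^2) m = (if even m then fps_nth A (m div 2) else 0)"
  using bit_sum_self_convolution[of "fps_nth A" m]
  by (simp add: power2_eq_square fps_mult_nth)

lemma rseq_0: "rseq 0 = 1"
  unfolding rseq_def by (auto intro: exI[of _ 0])

lemma rseq_odd: "rseq (2 * s + 1) = rseq s"
proof -
  have shift: "2 * s + 1 = 2 ^ Suc i - 1 \<longleftrightarrow> s = 2 ^ i - 1" for i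
  proof -
    have "(1::nat) \<le> 2 ^ i" by simp
    then show ?thesis by (simp only: power_Suc) linarith
  qed
  have "(\<exists>j. 2 * s + 1 = 2 ^ j - 1) \<longleftrightarrow> (\<exists>i. 2 * s + 1 = 2 ^ Suc i - 1)"
  proof
    assume "\<exists>j. 2 * s + 1 = 2 ^ j - 1"
    then obtain j where "2 * s + 1 = 2 ^ j - 1" ..
    then show "\<exists>i. 2 * s + 1 = 2 ^ Suc i - 1" by (cases j) auto
  qed blast
  then show ?thesis unfolding rseq_def shift by simp
qed

lemma rseq_even: "rseq (2 * s + 2) = 0"
proof -
  have "2 * s + 2 \<noteq> 2 ^ j - 1" for j
  proof (cases j)
    case (Suc i)
    have "(1::nat) \<le> 2 ^ i" by simp
    then show ?thesis unfolding Suc power_Suc by presburger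
  qed simp
  then show ?thesis unfolding rseq_def by auto
qed

definition rseq_fps :: "bit fps" where
  "rseq_fps = Abs_fps rseq"

lemma rseq_fps_eq: "rseq_fps = 1 + fps_X * rseq_fps^2"
proof (rule fps_ext)
  fix n
  show "fps_nth rseq_fps n = fps_nth (1 + fps_X * rseq_fps^2) n"
  proof (cases n)
    case 0
    then show ?thesis by (simp add: rseq_fps_def rseq_0)
  next
    case (Suc m)
    then show ?thesis
      using rseq_odd[of "m div 2"] rseq_even[of "m div 2"]
      by (cases "even m") (auto simp: rseq_fps_def fps_square_nth_bit elim!: evenE oddE)
  qed
qed

lemma bit_fps_add_self: "(A::bit fps) + A = 0"
  by (rule fps_ext) (simp only: fps_add_nth fps_zero_nth, simp)

lemma rseq_fps_plus_1: "rseq_fps + 1 = fps_X * rseq_fps^2"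
proof -
  have "rseq_fps + 1 = (1 + fps_X * rseq_fps^2) + 1"
    by (rule arg_cong[where f = "\<lambda>A. A + 1"]) (rule rseq_fps_eq)
  also have "\<dots> = fps_X * rseq_fps^2 + (1 + 1)"
    by (simp only: ac_simps)
  finally show ?thesis by (simp only: bit_fps_add_self add_0_right)
qed

lemma fps_shift_rseq_fps: "fps_shift 1 rseq_fps = rseq_fps^2"
proof -
  have "fps_shift 1 rseq_fps = fps_shift 1 (rseq_fps + 1)"
    by (rule fps_ext) simp
  also have "\<dots> = rseq_fps^2"
    unfolding rseq_fps_plus_1 by (subst mult.commute) (rule fps_shift_times_fps_X')
  finally show ?thesis .
qed

fun fib_poly :: "nat \<Rightarrow> bit poly" where
  "fib_poly 0 = 1"
| "fib_poly (Suc 0) = [:1, 1:]"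
| "fib_poly (Suc (Suc n)) = pCons 0 (fib_poly (Suc n)) + fib_poly n"

lemma coeff_fib_poly_above: "n < a \<Longrightarrow> coeff (fib_poly n) a = 0"
proof (induction n arbitrary: a rule: fib_poly.induct)
  case 1 then show ?case by (simp add: coeff_1)
next
  case 2 then show ?case by (cases a) (auto simp: coeff_pCons split: nat.split)
next
  case (3 n) then show ?case by (cases a) (auto simp: coeff_pCons)
qed

lemma coeff_fib_poly_top: "coeff (fib_poly n) n = 1"
  by (induction n rule: fib_poly.induct) (simp_all add: coeff_fib_poly_above)

definition fib_rseq :: "nat \<Rightarrow> nat \<Rightarrow> bit" where
  "fib_rseq n s = (\<Sum>a\<le>n. coeff (fib_poly n) a * rseq (a + s))"

lemma fib_rseq_Suc_Suc: "fib_rseq (Suc (Suc n)) s = fib_rseq (Suc n) (Suc s) + fib_rseq n s"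
proof -
  have "fib_rseq (Suc (Suc n)) s =
        (\<Sum>a\<le>Suc (Suc n). coeff (pCons 0 (fib_poly (Suc n))) a * rseq (a + s))
      + (\<Sum>a\<le>Suc (Suc n). coeff (fib_poly n) a * rseq (a + s))"
    by (simp add: fib_rseq_def distrib_right sum.distrib)
  also have "(\<Sum>a\<le>Suc (Suc n). coeff (pCons 0 (fib_poly (Suc n))) a * rseq (a + s))
           = fib_rseq (Suc n) (Suc s)"
    unfolding fib_rseq_def by (subst sum.atMost_Suc_shift) simp
  also have "(\<Sum>a\<le>Suc (Suc n). coeff (fib_poly n) a * rseq (a + s)) = fib_rseq n s"
    unfolding fib_rseq_def by (simp add: coeff_fib_poly_above)
  finally show ?thesis .
qed

lemma fps_fib_rseq: "Abs_fps (fib_rseq n) = fps_X ^ n * rseq_fps ^ (2 * n + 1)"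
proof (induction n rule: fib_poly.induct)
  case 1
  then show ?case by (rule fps_ext) (simp add: fib_rseq_def rseq_fps_def)
next
  case 2
  have "Abs_fps (fib_rseq 1) = rseq_fps + fps_shift 1 rseq_fps"
    by (rule fps_ext) (simp add: fib_rseq_def rseq_fps_def)
  also have "\<dots> = rseq_fps * (rseq_fps + 1)"
    unfolding fps_shift_rseq_fps by (simp add: power2_eq_square algebra_simps)
  also have "\<dots> = fps_X * rseq_fps ^ 3"
    unfolding rseq_fps_plus_1 by (simp add: power2_eq_square power3_eq_cube ac_simps)
  finally show ?case by simp
next
  case (3 n)
  let ?R = rseq_fps
  have sq: "?R^2 + 1 = fps_X^2 * ?R^4"
  proof -
    have "?R^2 + 1 = (?R + 1)^2"
      by (simp add: power2_eq_square algebra_simps bit_fps_add_self flip: add.assoc)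
    then show ?thesis by (simp add: rseq_fps_plus_1 power_mult_distrib flip: power_mult)
  qed
  have "Abs_fps (fib_rseq (Suc (Suc n))) = fps_shift 1 (Abs_fps (fib_rseq (Suc n))) + Abs_fps (fib_rseq n)"
    by (rule fps_ext) (simp add: fib_rseq_Suc_Suc)
  also have "fps_shift 1 (Abs_fps (fib_rseq (Suc n))) = fps_X^n * ?R^(2*n+3)"
  proof -
    have "Abs_fps (fib_rseq (Suc n)) = (fps_X^n * ?R^(2*n+3)) * fps_X"
      unfolding 3(1) by (simp add: ac_simps power_add power3_eq_cube)
    then show ?thesis by (simp only: fps_shift_times_fps_X')
  qed
  also have "fps_X^n * ?R^(2*n+3) + Abs_fps (fib_rseq n) = fps_X^n * ?R^(2*n+1) * (?R^2 + 1)"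
  proof -
    have "?R^(2*n+3) = ?R^((2*n+1) + 2)" by (rule arg_cong[where f = "power ?R"]) simp
    also have "\<dots> = ?R^(2*n+1) * ?R^2" by (rule power_add)
    finally show ?thesis
      unfolding 3(2) by (simp only: distrib_left mult_1_right mult.assoc)
  qed
  also have "\<dots> = (fps_X^n * fps_X^2) * (?R^(2*n+1) * ?R^4)"
    unfolding sq by (simp only: ac_simps)
  also have "\<dots> = fps_X^(n+2) * ?R^((2*n+1)+4)"
    by (simp only: power_add)
  also have "\<dots> = fps_X^(Suc (Suc n)) * ?R^(2 * Suc (Suc n) + 1)"
    by (rule arg_cong2[where f = "\<lambda>a b. fps_X^a * ?R^b"]) simp_all
  finally show ?case .
qed

lemma fib_rseq_eq: "fib_rseq n s = (if s < n then 0 else fps_nth (rseq_fps ^ (2 * n + 1)) (s - n))"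
proof -
  have "fib_rseq n s = fps_nth (Abs_fps (fib_rseq n)) s" by simp
  then show ?thesis unfolding fps_fib_rseq by (simp add: fps_X_power_mult_nth)
qed

lemma fib_rseq_below: "s < n \<Longrightarrow> fib_rseq n s = 0"
  by (simp add: fib_rseq_eq)

lemma fib_rseq_diag: "fib_rseq n n = 1"
  by (simp add: fib_rseq_eq fps_nth_power_0 rseq_fps_def rseq_0)

lemma mcoeff_0: "mcoeff 0 a b = 0"
  by (simp add: mcoeff_def)

lemma mcoeff_1: "mcoeff 1 a b = (if a = 0 \<and> b = 0 then 1 else 0)"
  by (simp add: mcoeff_def coeff_1)

lemma mcoeff_add: "mcoeff (p + q) a b = mcoeff p a b + mcoeff q a b"
  by (simp add: mcoeff_def)

lemma mcoeff_Xf_mult: "mcoeff (Xf * p) a b = (if a = 0 then 0 else mcoeff p (a - 1) b)"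
  by (cases a) (simp_all add: mcoeff_def Xf_def coeff_pCons)

lemma mcoeff_Zf_mult: "mcoeff (Zf * p) a b = (if b = 0 then 0 else mcoeff p a (b - 1))"
  by (cases b) (simp_all add: mcoeff_def Zf_def coeff_pCons)

lemma mcoeff_Xf: "mcoeff Xf a b = (if a = 1 \<and> b = 0 then 1 else 0)"
  using mcoeff_Xf_mult[of 1 a b] by (simp add: mcoeff_1)

lemma mcoeff_Zf: "mcoeff Zf a b = (if a = 0 \<and> b = 1 then 1 else 0)"
  using mcoeff_Zf_mult[of 1 a b] by (simp add: mcoeff_1)

definition homogeneous :: "form \<Rightarrow> nat \<Rightarrow> bool" where
  "homogeneous p m \<longleftrightarrow> (\<forall>a b. mcoeff p a b \<noteq> 0 \<longrightarrow> a + b = m)"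

lemma homogeneous_Zf_mult:
  assumes "homogeneous p m"
  shows "homogeneous (Zf * p) (Suc m)"
  unfolding homogeneous_def
proof (intro allI impI)
  fix a b
  assume "mcoeff (Zf * p) a b \<noteq> 0"
  then have "b > 0" and "mcoeff p a (b - 1) \<noteq> 0"
    by (auto simp: mcoeff_Zf_mult split: if_splits)
  moreover have "a + (b - 1) = m"
    using assms calculation(2) unfolding homogeneous_def by blast
  ultimately show "a + b = Suc m" by simp
qed

lemma tdeg_homogeneous:
  assumes "homogeneous p m" and "mcoeff p a b \<noteq> 0"
  shows "tdeg p = m"
proof -
  have "p \<noteq> 0" using assms(2) by (auto simp: mcoeff_0)
  moreover have "{a + b | a b. mcoeff p a b \<noteq> 0} = {m}"
    using assms by (auto simp: homogeneous_def)
  ultimately show ?thesis by (simp add: tdeg_def)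
qed

lemma Delta_eq_sum_mcoeff:
  assumes td: "tdeg p = m" and mk: "m \<le> k + 1"
  shows "Delta p (k + 2) = (\<Sum>a\<le>m. mcoeff p a (m - a) * rseq (a + (k + 1 - m)))"
proof -
  define g where "g j = (if int m + (1 - int (k+2)) - j \<ge> 0 \<and> int (k+2) - 1 + j \<ge> 0 then
           rseq (nat (- j)) * mcoeff p (nat (int m + (1 - int (k+2)) - j)) (nat (int (k+2) - 1 + j))
         else 0)" for j
  define h where "h a = int m - int k - 1 - int a" for a
  have "Delta p (k + 2) = (\<Sum>j\<in>{1 - int (k+2)..0}. g j)"
    unfolding Delta_def td g_def using mk by simp
  also have "\<dots> = (\<Sum>j\<in>h ` {..m}. g j)"
  proof -
    have "g j = 0" if "j \<in> {1 - int (k+2)..0} - h ` {..m}" for j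
    proof (rule ccontr)
      assume "g j \<noteq> 0"
      then have "int m - int k - 1 - j \<ge> 0" and "int k + 1 + j \<ge> 0"
        by (auto simp: g_def split: if_splits)
      then have "nat (int m - int k - 1 - j) \<in> {..m}" and "j = h (nat (int m - int k - 1 - j))"
        by (auto simp: h_def)
      then show False using that by blast
    qed
    moreover have "h ` {..m} \<subseteq> {1 - int (k+2)..0}"
      using mk by (auto simp: h_def)
    ultimately show ?thesis
      by (intro sum.mono_neutral_right) auto
  qed
  also have "\<dots> = (\<Sum>a\<le>m. g (h a))"
    by (subst sum.reindex) (auto simp: inj_on_def h_def)
  also have "\<dots> = (\<Sum>a\<le>m. mcoeff p a (m - a) * rseq (a + (k + 1 - m)))"
  proof (rule sum.cong)
    fix a assume a: "a \<in> {..m}"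
    have "nat (- h a) = a + (k + 1 - m)" "nat (int m + (1 - int (k+2)) - h a) = a"
      "nat (int (k+2) - 1 + h a) = m - a"
      using a mk by (auto simp: h_def)
    then show "g (h a) = mcoeff p a (m - a) * rseq (a + (k + 1 - m))"
      unfolding g_def using a by (simp add: h_def mult.commute)
  qed simp
  finally show ?thesis .
qed

fun fib_form :: "nat \<Rightarrow> form" where
  "fib_form 0 = 1"
| "fib_form (Suc 0) = Xf + Zf"
| "fib_form (Suc (Suc n)) = Xf * fib_form (Suc n) + Zf * (Zf * fib_form n)"

lemma mcoeff_fib_form:
  "mcoeff (fib_form n) a b = (if a + b = n then coeff (fib_poly n) a else 0)"
proof (induction n arbitrary: a b rule: fib_form.induct)
  case 1
  then show ?case by (simp add: mcoeff_1 coeff_1)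
next
  case 2
  then show ?case by (auto simp: mcoeff_add mcoeff_Xf mcoeff_Zf coeff_pCons split: nat.split)
next
  case (3 n)
  have "coeff (fib_poly n) a = 0" if "b < 2" "a + b = Suc (Suc n)"
    using that by (intro coeff_fib_poly_above) simp
  with 3 show ?case
    by (cases a; cases "b \<ge> 2") (auto simp: mcoeff_add mcoeff_Xf_mult mcoeff_Zf_mult coeff_pCons)
qed

lemma homogeneous_fib_form: "homogeneous (fib_form n) n"
  by (simp add: homogeneous_def mcoeff_fib_form)

lemma tdeg_fib_form: "tdeg (fib_form n) = n"
  by (rule tdeg_homogeneous[OF homogeneous_fib_form, of _ n 0])
     (simp add: mcoeff_fib_form coeff_fib_poly_top)

lemma tdeg_Zf_Zf_fib_form: "tdeg (Zf * (Zf * fib_form n)) = n + 2"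
  by (rule tdeg_homogeneous[of _ _ n 2])
     (simp_all add: homogeneous_Zf_mult homogeneous_fib_form mcoeff_Zf_mult
       mcoeff_fib_form coeff_fib_poly_top)

lemma Delta_fib_form:
  assumes "n \<le> k + 1"
  shows "Delta (fib_form n) (k + 2) = fib_rseq n (k + 1 - n)"
proof -
  have "Delta (fib_form n) (k + 2) = (\<Sum>a\<le>n. mcoeff (fib_form n) a (n - a) * rseq (a + (k + 1 - n)))"
    by (rule Delta_eq_sum_mcoeff) (use assms in \<open>simp_all add: tdeg_fib_form\<close>)
  also have "\<dots> = fib_rseq n (k + 1 - n)"
    unfolding fib_rseq_def by (rule sum.cong) (simp_all add: mcoeff_fib_form)
  finally show ?thesis .
qed

lemma step_even_fib_forms:
  "step (2 * i) (fib_form (Suc i), Zf * fib_form i) = (fib_form (Suc i), Zf * (Zf * fib_form i))"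
proof -
  have "Delta (fib_form (Suc i)) (2 * i + 2) = fib_rseq (Suc i) i"
    using Delta_fib_form[of "Suc i" "2 * i"] by simp
  then have "Delta (fib_form (Suc i)) (2 * i + 2) = 0"
    by (simp add: fib_rseq_below)
  then show ?thesis by (simp add: step_def Let_def)
qed

lemma step_odd_fib_forms:
  "step (2 * i + 1) (fib_form (Suc i), Zf * (Zf * fib_form i)) = (fib_form (Suc (Suc i)), Zf * fib_form (Suc i))"
proof -
  have "Delta (fib_form (Suc i)) (2 * i + 1 + 2) = fib_rseq (Suc i) (Suc i)"
    using Delta_fib_form[of "Suc i" "2 * i + 1"] by simp
  then have "Delta (fib_form (Suc i)) (2 * i + 1 + 2) = 1"
    by (simp add: fib_rseq_diag)
  moreover have "int (tdeg (Zf * (Zf * fib_form i))) - int (tdeg (fib_form (Suc i))) = 1"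
    by (simp add: tdeg_Zf_Zf_fib_form tdeg_fib_form)
  ultimately show ?thesis
    by (simp add: step_def Let_def xpow_def Xf_def monom_altdef)
qed

lemma FG_fib_forms:
  "FG (2 * i) = (fib_form (Suc i), Zf * fib_form i) \<and>
   FG (2 * i + 1) = (fib_form (Suc i), Zf * (Zf * fib_form i))"
proof (induction i)
  case 0
  then show ?case using step_even_fib_forms[of 0] by simp
next
  case (Suc i)
  have "FG (2 * Suc i) = step (2 * i + 1) (FG (2 * i + 1))"
    by simp
  also have "\<dots> = (fib_form (Suc (Suc i)), Zf * fib_form (Suc i))"
    using Suc.IH step_odd_fib_forms by (simp del: FG.simps)
  finally have even: "FG (2 * Suc i) = (fib_form (Suc (Suc i)), Zf * fib_form (Suc i))" .
  have "FG (2 * Suc i + 1) = step (2 * Suc i) (FG (2 * Suc i))"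
    by simp
  also have "\<dots> = (fib_form (Suc (Suc i)), Zf * (Zf * fib_form (Suc i)))"
    unfolding even by (rule step_even_fib_forms)
  finally show ?case using even by blast
qed

lemma FG_Suc_vmul: "FG (Suc n) = vmul (FG n) (if even n then Emat else Umat)"
proof (cases "even n")
  case True
  then obtain i where "n = 2 * i" by blast
  with True show ?thesis
    using FG_fib_forms[of i] by (simp del: FG.simps add: vmul_def Emat_def mult.commute)
next
  case False
  then obtain i where n: "n = 2 * i + 1" using oddE by blast
  have "FG (Suc n) = FG (2 * Suc i)" using n by simp
  with False n show ?thesis
    using FG_fib_forms[of i] FG_fib_forms[of "Suc i"]
    by (simp del: FG.simps add: vmul_def Umat_def algebra_simps)
qed

lemma vmul_vmul: "vmul (vmul v M) N = vmul v (mmul M N)"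
  by (cases v; cases M; cases N) (simp add: vmul_def mmul_def algebra_simps)

lemma vmul_mid: "vmul v mid = v"
  by (cases v) (simp add: vmul_def mid_def)

lemma FG_odd_Pmat: "FG (2 * i + 1) = vmul (Xf + Zf, Zf ^ 2) (mpow Pmat i)"
proof (induction i)
  case 0
  show ?case using FG_fib_forms[of 0] by (simp add: vmul_mid power2_eq_square)
next
  case (Suc i)
  have "FG (2 * Suc i + 1) = vmul (vmul (FG (2 * i + 1)) Umat) Emat"
    using FG_Suc_vmul[of "Suc (2 * i + 1)"] FG_Suc_vmul[of "2 * i + 1"] by (simp del: FG.simps)
  also have "\<dots> = vmul (FG (2 * i + 1)) Pmat"
    by (simp only: vmul_vmul Pmat_def)
  also have "\<dots> = vmul (Xf + Zf, Zf ^ 2) (mpow Pmat (Suc i))"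
    unfolding Suc.IH by (simp add: vmul_vmul)
  finally show ?case .
qed

lemma FG_even_Pmat: "FG (2 * Suc i) = vmul (vmul (Xf + Zf, Zf ^ 2) (mpow Pmat i)) Umat"
proof -
  have "FG (2 * Suc i) = vmul (FG (2 * i + 1)) Umat"
    using FG_Suc_vmul[of "2 * i + 1"] by simp
  then show ?thesis by (simp only: FG_odd_Pmat)
qed

theorem corollary4:
  shows "(\<forall>n. FG (Suc n) = vmul (FG n) (if even n then Emat else Umat))
       \<and> (\<forall>i\<ge>1. FG (2 * i) = vmul (vmul (Xf + Zf, Zf ^ 2) (mpow Pmat (i - 1))) Umat
               \<and> FG (2 * i + 1) = vmul (Xf + Zf, Zf ^ 2) (mpow Pmat i))"
proof (intro conjI allI impI)
  show "FG (Suc n) = vmul (FG n) (if even n then Emat else Umat)" for n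
    by (rule FG_Suc_vmul)
  show "FG (2 * i + 1) = vmul (Xf + Zf, Zf ^ 2) (mpow Pmat i)" for i
    by (rule FG_odd_Pmat)
  fix i :: nat
  assume "i \<ge> 1"
  then obtain j where "i = Suc j" using not0_implies_Suc by fastforce
  then show "FG (2 * i) = vmul (vmul (Xf + Zf, Zf ^ 2) (mpow Pmat (i - 1))) Umat"
    using FG_even_Pmat[of j] by simp
qed

end
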